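(* Let $\mathcal{N}$ be a cactus network, let $t$ be a sink of $\mathcal{N}$ with parents $p_l$ and $p_r$, and let $s$ be the lowest common ancestor of $\{p_l,p_r\}$. Let $P_l$ and $P_r$ be directed paths from $s$ to $p_l$ and from $s$ to $p_r$, respectively. Then (i) $P_l$ and $P_r$ are edge-disjoint; (ii) neither $P_l$ nor $P_r$ contains a sink, except possibly the vertex $s$; (iii) $P_l$ and $P_r$ are the unique directed paths from $s$ to $p_l$ and from $s$ to $p_r$.
   Context: A cactus network is a finite directed acyclic graph $\mathcal{N}$ with a unique vertex of indegree $0$ (the root) such that in its underlying undirected graph $\mathcal{N}^\star$ every edge belongs to at most one simple cycle. $u\succcurlyeq v$ means there is a directed path (possibly of length $0$) from $u$ to $v$; $u\succ v$ means $u\succcurlyeq v$, $u\neq v$. A lowest common ancestor of a set $V$ is a vertex $u$ with $u\succcurlyeq v$ for all $v\in V$ such that no $u'$ with $u\succ u'$ satisfies $u'\succcurlyeq v$ for all $v\in V$; in a cactus network it is unique. A sink is a vertex of indegree $2$ (every vertex of a cactus network has indegree at most $2$). *)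

theory Defs
  imports Main
begin

definition indeg :: "('a \<times> 'a) set \<Rightarrow> 'a \<Rightarrow> nat" where
  "indeg E v = card {u. (u, v) \<in> E}"

definition uadj :: "('a \<times> 'a) set \<Rightarrow> 'a \<Rightarrow> 'a \<Rightarrow> bool" where
  "uadj E u v \<longleftrightarrow> (u, v) \<in> E \<or> (v, u) \<in> E"

definition ucycle :: "('a \<times> 'a) set \<Rightarrow> 'a list \<Rightarrow> bool" where
  "ucycle E cs \<longleftrightarrow> length cs \<ge> 3 \<and> distinct cs \<and>
     (\<forall>i < length cs. uadj E (cs ! i) (cs ! ((i + 1) mod length cs)))"

definition cycle_edges :: "'a list \<Rightarrow> 'a set set" where
  "cycle_edges cs = {{cs ! i, cs ! ((i + 1) mod length cs)} | i. i < length cs}"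

definition simple_cycles :: "('a \<times> 'a) set \<Rightarrow> 'a set set set" where
  "simple_cycles E = {cycle_edges cs | cs. ucycle E cs}"

definition cactus_network :: "'a set \<Rightarrow> ('a \<times> 'a) set \<Rightarrow> bool" where
  "cactus_network V E \<longleftrightarrow>
     finite V \<and> E \<subseteq> V \<times> V \<and> acyclic E \<and>
     (\<exists>!r. r \<in> V \<and> indeg E r = 0) \<and>
     (\<forall>e C1 C2. C1 \<in> simple_cycles E \<and> C2 \<in> simple_cycles E \<and> e \<in> C1 \<and> e \<in> C2
        \<longrightarrow> C1 = C2)"

definition reach :: "('a \<times> 'a) set \<Rightarrow> 'a \<Rightarrow> 'a \<Rightarrow> bool" where
  "reach E u v \<longleftrightarrow> (u, v) \<in> E\<^sup>*"

definition is_lca :: "('a \<times> 'a) set \<Rightarrow> 'a set \<Rightarrow> 'a \<Rightarrow> bool" where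
  "is_lca E A u \<longleftrightarrow> (\<forall>v\<in>A. reach E u v) \<and>
     \<not> (\<exists>u'. reach E u u' \<and> u \<noteq> u' \<and> (\<forall>v\<in>A. reach E u' v))"

definition is_sink :: "('a \<times> 'a) set \<Rightarrow> 'a \<Rightarrow> bool" where
  "is_sink E v \<longleftrightarrow> indeg E v = 2"

definition dpath :: "('a \<times> 'a) set \<Rightarrow> 'a list \<Rightarrow> 'a \<Rightarrow> 'a \<Rightarrow> bool" where
  "dpath E ps u v \<longleftrightarrow> ps \<noteq> [] \<and> hd ps = u \<and> last ps = v \<and>
     (\<forall>i. i + 1 < length ps \<longrightarrow> (ps ! i, ps ! (i + 1)) \<in> E)"

definition path_edges :: "'a list \<Rightarrow> ('a \<times> 'a) set" where
  "path_edges ps = set (zip ps (tl ps))"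

end

theory Submission
  imports Defs
begin

text \<open>
  The heart of the proof: every vertex v \<noteq> s of Pl has its predecessor u on Pl as
  its only parent. Suppose w \<noteq> u were another parent, let y be the lowest common
  ancestor of u and w, and close paths from y to u and to w through v into a simple
  cycle. It shares the edge {u,v} with the simple cycle formed by Pl, Pr and the two
  edges into t, so in a cactus the two cycles coincide and {w,v} lies on the latter,
  which is impossible because Pl and Pr meet only in s. Hence no vertex of Pl other
  than s is a sink, and walking backwards along unique parents recovers Pl from any
  path from s to pl. Edge-disjointness holds because Pl and Pr share only s.
\<close>

lemma path_edges_conv_nth: "path_edges ys = {(ys!i, ys!(Suc i)) | i. Suc i < length ys}"
  unfolding path_edges_def by (auto simp: set_zip nth_tl)

lemma path_edges_Nil [simp]: "path_edges [] = {}"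
  and path_edges_singleton [simp]: "path_edges [x] = {}"
  and path_edges_Cons_Cons [simp]: "path_edges (x # y # xs) = insert (x, y) (path_edges (y # xs))"
  by (auto simp: path_edges_def)

lemma path_edges_Cons: "xs \<noteq> [] \<Longrightarrow> path_edges (x # xs) = insert (x, hd xs) (path_edges xs)"
  by (cases xs) auto

lemma path_edges_append:
  "xs \<noteq> [] \<Longrightarrow> ys \<noteq> [] \<Longrightarrow>
   path_edges (xs @ ys) = path_edges xs \<union> {(last xs, hd ys)} \<union> path_edges ys"
  by (induction xs rule: list_nonempty_induct) (auto simp: path_edges_Cons)

lemma path_edges_snoc: "xs \<noteq> [] \<Longrightarrow> path_edges (xs @ [y]) = insert (last xs, y) (path_edges xs)"
  using path_edges_append[of xs "[y]"] by auto

lemma path_edges_rev: "path_edges (rev xs) = (path_edges xs)\<inverse>"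
proof (induction xs)
  case (Cons x xs)
  then show ?case
    by (cases "xs = []") (auto simp: path_edges_snoc path_edges_Cons last_rev)
qed simp

lemma path_edgesD: "(p, q) \<in> path_edges xs \<Longrightarrow> p \<in> set xs \<and> q \<in> set (tl xs)"
  unfolding path_edges_def by (auto dest: set_zip_leftD set_zip_rightD)

lemma path_edges_mem_setD: "(p, q) \<in> path_edges xs \<Longrightarrow> p \<in> set xs \<and> q \<in> set xs"
  using path_edgesD by (metis list.set_sel(2) empty_iff list.set(1))

lemma path_edges_into_hd: "xs \<noteq> [] \<Longrightarrow> v \<in> set xs \<Longrightarrow> v \<noteq> hd xs \<Longrightarrow> \<exists>u. (u, v) \<in> path_edges xs"
proof (induction xs rule: list_nonempty_induct)
  case (cons x xs)
  then show ?case by (cases "v = hd xs") (auto simp: path_edges_Cons)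
qed simp

lemma distinct_path_edges_same_target:
  "distinct xs \<Longrightarrow> (p, q) \<in> path_edges xs \<Longrightarrow> (p', q) \<in> path_edges xs \<Longrightarrow> p = p'"
proof (induction xs)
  case (Cons x xs)
  have "(r, hd xs) \<notin> path_edges xs" for r
    using path_edgesD[of r "hd xs" xs] Cons.prems(1) by (cases xs) auto
  with Cons show ?case by (cases "xs = []") (auto simp: path_edges_Cons)
qed simp

lemma path_edges_close:
  assumes "cs \<noteq> []"
  shows "path_edges (cs @ [hd cs]) = {(cs!i, cs!((i+1) mod length cs)) | i. i < length cs}"
proof -
  have succ: "(cs @ [hd cs]) ! Suc i = cs ! ((i+1) mod length cs)" if "i < length cs" for i
  proof (cases "Suc i < length cs")
    case False
    then have "Suc i = length cs" using that by simp
    then show ?thesis using assms by (simp add: nth_append hd_conv_nth)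
  qed (simp add: nth_append)
  have "path_edges (cs @ [hd cs]) =
      (\<lambda>i. ((cs @ [hd cs]) ! i, (cs @ [hd cs]) ! Suc i)) ` {..<length cs}"
    by (auto simp: path_edges_conv_nth)
  also have "\<dots> = (\<lambda>i. (cs!i, cs!((i+1) mod length cs))) ` {..<length cs}"
    using succ by (intro image_cong) (auto simp: nth_append)
  finally show ?thesis by auto
qed

lemma dpath_iff_path_edges:
  "dpath E ps u v \<longleftrightarrow> ps \<noteq> [] \<and> hd ps = u \<and> last ps = v \<and> path_edges ps \<subseteq> E"
  unfolding dpath_def path_edges_conv_nth by auto

lemma trancl_path_hd: "path_edges (x # xs) \<subseteq> E \<Longrightarrow> y \<in> set xs \<Longrightarrow> (x, y) \<in> E\<^sup>+"
proof (induction xs arbitrary: x)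
  case (Cons a xs)
  then have "(x, a) \<in> E" and "path_edges (a # xs) \<subseteq> E" by auto
  with Cons show ?case by (cases "y = a") (auto intro: trancl_into_trancl2)
qed simp

lemma rtrancl_path_hd: "xs \<noteq> [] \<Longrightarrow> path_edges xs \<subseteq> E \<Longrightarrow> y \<in> set xs \<Longrightarrow> (hd xs, y) \<in> E\<^sup>*"
  by (cases xs) (auto dest: trancl_path_hd)

lemma rtrancl_path_last: "path_edges xs \<subseteq> E \<Longrightarrow> y \<in> set xs \<Longrightarrow> (y, last xs) \<in> E\<^sup>*"
proof (induction xs)
  case (Cons x xs)
  show ?case
  proof (cases "xs = []")
    case False
    then have "(x, last xs) \<in> E\<^sup>+" using trancl_path_hd[OF Cons.prems(1)] by simp
    with Cons False show ?thesis by (auto simp: path_edges_Cons)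
  qed (use Cons in simp)
qed simp

lemma rtrancl_imp_dpath: "(x, y) \<in> E\<^sup>* \<Longrightarrow> \<exists>ps. dpath E ps x y"
proof (induction rule: rtrancl_induct)
  case base
  show ?case by (rule exI[of _ "[x]"]) (simp add: dpath_iff_path_edges)
next
  case (step y z)
  then obtain ps where "dpath E ps x y" by blast
  with step show ?case
    by (intro exI[of _ "ps @ [z]"]) (auto simp: dpath_iff_path_edges path_edges_snoc)
qed

lemma acyclic_path_distinct: "acyclic E \<Longrightarrow> path_edges xs \<subseteq> E \<Longrightarrow> distinct xs"
proof (induction xs)
  case (Cons x xs)
  have "x \<notin> set xs"
    using trancl_path_hd[OF Cons.prems(2)] Cons.prems(1) unfolding acyclic_def by blast
  moreover have "path_edges xs \<subseteq> E"
    using Cons.prems(2) by (cases "xs = []") (auto simp: path_edges_Cons)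
  ultimately show ?case using Cons by simp
qed simp

lemma acyclic_not_both_directions: "acyclic E \<Longrightarrow> (p, q) \<in> E \<Longrightarrow> (q, p) \<notin> E"
  unfolding acyclic_def by (meson r_into_trancl' trancl_trans)

lemma acyclic_dpath_successor_notin:
  assumes "acyclic E" and "dpath E P x a" and "(a, c) \<in> E"
  shows "c \<notin> set P"
proof
  assume "c \<in> set P"
  then have "(c, a) \<in> E\<^sup>*" using rtrancl_path_last[of P E c] assms(2) by (auto simp: dpath_iff_path_edges)
  with assms(3) have "(a, a) \<in> E\<^sup>+" by auto
  with assms(1) show False unfolding acyclic_def by blast
qed

section \<open>Lowest common ancestors in a cactus network\<close>

lemma cactus_network_acyclic: "cactus_network V E \<Longrightarrow> acyclic E"
  and cactus_network_edges: "cactus_network V E \<Longrightarrow> E \<subseteq> V \<times> V"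
  and cactus_network_finite_edges: "cactus_network V E \<Longrightarrow> finite E"
  unfolding cactus_network_def by (blast, blast, meson finite_SigmaI finite_subset)

lemma cactus_network_root_reaches:
  assumes cactus: "cactus_network V E"
  shows "\<exists>r. \<forall>y\<in>V. (r, y) \<in> E\<^sup>*"
proof -
  have "\<exists>!r. r \<in> V \<and> indeg E r = 0"
    using cactus unfolding cactus_network_def by (elim conjE)
  then obtain r where root_unique: "\<And>y. y \<in> V \<Longrightarrow> indeg E y = 0 \<Longrightarrow> y = r"
    by blast
  have wf: "wf E"
    using cactus_network_finite_edges[OF cactus] cactus_network_acyclic[OF cactus]
    by (rule finite_acyclic_wf)
  have "y \<in> V \<longrightarrow> (r, y) \<in> E\<^sup>*" for y
    using wf
  proof (induction y rule: wf_induct_rule)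
    case (less y)
    show ?case
    proof (intro impI, cases "\<exists>u. (u, y) \<in> E")
      case True
      then obtain u where "(u, y) \<in> E" by blast
      moreover have "u \<in> V" using \<open>(u, y) \<in> E\<close> cactus_network_edges[OF cactus] by blast
      ultimately have "(r, u) \<in> E\<^sup>*" using less by blast
      with \<open>(u, y) \<in> E\<close> show "(r, y) \<in> E\<^sup>*" by simp
    next
      case False
      assume "y \<in> V"
      moreover have "indeg E y = 0" using False by (simp add: indeg_def)
      ultimately show "(r, y) \<in> E\<^sup>*" using root_unique by blast
    qed
  qed
  then show ?thesis by blast
qed

lemma cactus_network_lca_exists:
  assumes cactus: "cactus_network V E" and "u \<in> V" "w \<in> V"
  obtains y where "is_lca E {u, w} y"
proof -
  obtain r where r: "\<forall>y\<in>V. (r, y) \<in> E\<^sup>*" using cactus_network_root_reaches[OF cactus] ..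
  define A where "A = {x. (x, u) \<in> E\<^sup>* \<and> (x, w) \<in> E\<^sup>*}"
  have rA: "r \<in> A" unfolding A_def using \<open>u \<in> V\<close> \<open>w \<in> V\<close> r by blast
  have wf: "wf (E\<inverse>)"
    using cactus_network_finite_edges[OF cactus] cactus_network_acyclic[OF cactus]
    by (rule finite_acyclic_wf_converse)
  obtain z where z: "z \<in> A" and zmin: "\<And>y. (z, y) \<in> E \<Longrightarrow> y \<notin> A"
    by (rule wfE_min[OF wf rA]) auto
  have "is_lca E {u, w} z"
    unfolding is_lca_def reach_def
  proof (intro conjI notI)
    show "\<forall>v\<in>{u, w}. (z, v) \<in> E\<^sup>*" using z by (simp add: A_def)
  next
    assume "\<exists>u'. (z, u') \<in> E\<^sup>* \<and> z \<noteq> u' \<and> (\<forall>v\<in>{u, w}. (u', v) \<in> E\<^sup>*)"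
    then obtain u' where "(z, u') \<in> E\<^sup>+" and "u' \<in> A"
      by (auto simp: A_def rtrancl_eq_or_trancl)
    then obtain y where "(z, y) \<in> E" and "(y, u') \<in> E\<^sup>*" by (blast dest: tranclD)
    with \<open>u' \<in> A\<close> have "y \<in> A" by (auto simp: A_def intro: rtrancl_trans)
    with zmin \<open>(z, y) \<in> E\<close> show False by blast
  qed
  with that show ?thesis .
qed

lemma lca_paths_meet_only_at_lca:
  assumes lca: "is_lca E {a, b} x" and P: "dpath E P x a" and Q: "dpath E Q x b"
    and "y \<in> set P" "y \<in> set Q"
  shows "y = x"
proof (rule ccontr)
  assume "y \<noteq> x"
  moreover have "(x, y) \<in> E\<^sup>*" using rtrancl_path_hd[of P E y] P assms(4)
    by (auto simp: dpath_iff_path_edges)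
  moreover have "(y, a) \<in> E\<^sup>*" using rtrancl_path_last[of P E y] P assms(4)
    by (auto simp: dpath_iff_path_edges)
  moreover have "(y, b) \<in> E\<^sup>*" using rtrancl_path_last[of Q E y] Q assms(5)
    by (auto simp: dpath_iff_path_edges)
  ultimately show False using lca unfolding is_lca_def reach_def by auto
qed

lemma lca_paths_edge_disjoint:
  assumes "acyclic E" and lca: "is_lca E {a, b} x"
    and P: "dpath E P x a" and Q: "dpath E Q x b"
  shows "path_edges P \<inter> path_edges Q = {}"
proof (intro equals0I, safe)
  fix p q assume pq: "(p, q) \<in> path_edges P" "(p, q) \<in> path_edges Q"
  then have "p = q"
    using lca_paths_meet_only_at_lca[OF lca P Q] path_edges_mem_setD[OF pq(1)]
      path_edges_mem_setD[OF pq(2)] by auto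
  moreover have "(p, q) \<in> E" using pq(1) P by (auto simp: dpath_iff_path_edges)
  ultimately show False using \<open>acyclic E\<close> unfolding acyclic_def by auto
qed

section \<open>Simple cycles through a lowest common ancestor\<close>

definition undirected_edges :: "('a \<times> 'a) set \<Rightarrow> 'a set set" where
  "undirected_edges F = (\<lambda>(p, q). {p, q}) ` F"

lemma cycle_edges_conv_path_edges:
  "cs \<noteq> [] \<Longrightarrow> cycle_edges cs = undirected_edges (path_edges (cs @ [hd cs]))"
  unfolding cycle_edges_def undirected_edges_def by (auto simp: path_edges_close)

lemma ucycle_iff_path_edges:
  "cs \<noteq> [] \<Longrightarrow> ucycle E cs \<longleftrightarrow> length cs \<ge> 3 \<and> distinct cs \<and>
     (\<forall>(p, q) \<in> path_edges (cs @ [hd cs]). uadj E p q)"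
  unfolding ucycle_def by (auto simp: path_edges_close)

lemma lca_paths_cycle:
  assumes ac: "acyclic E" and lca: "is_lca E {a, b} x"
    and P: "dpath E P x a" and Q: "dpath E Q x b" and "a \<noteq> b"
    and ac_E: "(a, c) \<in> E" and bc_E: "(b, c) \<in> E"
  shows "ucycle E (P @ c # rev (tl Q))"
    and "cycle_edges (P @ c # rev (tl Q)) =
           undirected_edges (path_edges P \<union> path_edges Q \<union> {(a, c), (b, c)})"
proof -
  let ?cs = "P @ c # rev (tl Q)"
  have "P \<noteq> []" "hd P = x" "last P = a" and eP: "path_edges P \<subseteq> E"
    using P by (auto simp: dpath_iff_path_edges)
  have "Q \<noteq> []" "last Q = b" and eQ: "path_edges Q \<subseteq> E"
    using Q by (auto simp: dpath_iff_path_edges)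
  have Q_eq: "Q = x # tl Q" using Q by (cases Q) (auto simp: dpath_iff_path_edges)
  have closed: "?cs @ [hd ?cs] = P @ c # rev Q"
    using \<open>P \<noteq> []\<close> \<open>hd P = x\<close> by (subst (2) Q_eq) simp
  have edges: "path_edges (?cs @ [hd ?cs]) = path_edges P \<union> {(a, c), (c, b)} \<union> (path_edges Q)\<inverse>"
    unfolding closed using \<open>P \<noteq> []\<close> \<open>Q \<noteq> []\<close> \<open>last P = a\<close> \<open>last Q = b\<close>
    by (auto simp: path_edges_append path_edges_Cons path_edges_rev hd_rev)
  have "distinct P" "distinct Q" using acyclic_path_distinct[OF ac] eP eQ by auto
  moreover have "c \<notin> set P" "c \<notin> set Q"
    using acyclic_dpath_successor_notin[OF ac] P Q ac_E bc_E by auto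
  moreover have "set P \<inter> set (tl Q) = {}"
    using lca_paths_meet_only_at_lca[OF lca P Q] \<open>distinct Q\<close> Q_eq
    by (metis disjoint_iff distinct.simps(2) list.set_intros(2))
  ultimately have "distinct ?cs" using Q_eq by (auto simp: distinct_tl) (metis list.set_intros(2))
  moreover have "length ?cs \<ge> 3"
  proof (cases "tl Q")
    case Nil
    then have "P \<noteq> [x]" using Q_eq \<open>last Q = b\<close> \<open>last P = a\<close> \<open>a \<noteq> b\<close> by metis
    then have "length P \<ge> 2" using \<open>P \<noteq> []\<close> \<open>hd P = x\<close> by (cases P; cases "tl P") auto
    then show ?thesis by simp
  qed (use \<open>P \<noteq> []\<close> in \<open>cases P; simp\<close>)
  moreover have "\<forall>(p, q) \<in> path_edges (?cs @ [hd ?cs]). uadj E p q"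
    unfolding edges using eP eQ ac_E bc_E by (auto simp: uadj_def)
  ultimately show "ucycle E ?cs" by (simp add: ucycle_iff_path_edges)
  show "cycle_edges ?cs = undirected_edges (path_edges P \<union> path_edges Q \<union> {(a, c), (b, c)})"
  proof -
    have "cycle_edges ?cs = undirected_edges (path_edges (?cs @ [hd ?cs]))"
      by (rule cycle_edges_conv_path_edges) simp
    also have "\<dots> = undirected_edges (path_edges P \<union> {(a, c), (c, b)} \<union> (path_edges Q)\<inverse>)"
      by (simp only: edges)
    finally show ?thesis by (auto simp: undirected_edges_def image_iff insert_commute)
  qed
qed

lemma cactus_network_cycles_sharing_edge:
  assumes "cactus_network V E" and "ucycle E cs" "ucycle E ds"
    and "e \<in> cycle_edges cs" "e \<in> cycle_edges ds"
  shows "cycle_edges cs = cycle_edges ds"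
proof -
  have "\<forall>e C1 C2. C1 \<in> simple_cycles E \<and> C2 \<in> simple_cycles E \<and> e \<in> C1 \<and> e \<in> C2 \<longrightarrow> C1 = C2"
    using assms(1) unfolding cactus_network_def by (elim conjE)
  moreover have "cycle_edges cs \<in> simple_cycles E" "cycle_edges ds \<in> simple_cycles E"
    using assms(2,3) unfolding simple_cycles_def by blast+
  ultimately show ?thesis using assms(4,5) by blast
qed

lemma second_parent_edge_not_on_lca_cycle:
  assumes ac: "acyclic E" and lca: "is_lca E {a, b} x"
    and P: "dpath E P x a" and Q: "dpath E Q x b" and ac_E: "(a, c) \<in> E"
    and uv: "(u, v) \<in> path_edges P" and wv: "(w, v) \<in> E" and "w \<noteq> u"
  shows "{w, v} \<notin> undirected_edges (path_edges P \<union> path_edges Q \<union> {(a, c), (b, c)})"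
proof
  assume "{w, v} \<in> undirected_edges (path_edges P \<union> path_edges Q \<union> {(a, c), (b, c)})"
  then obtain p q where pq: "(p, q) \<in> path_edges P \<union> path_edges Q \<union> {(a, c), (b, c)}"
    and wv_pq: "{w, v} = {p, q}"
    by (auto simp: undirected_edges_def)
  have eP: "path_edges P \<subseteq> E" and "P \<noteq> []" "hd P = x" "last P = a"
    using P by (auto simp: dpath_iff_path_edges)
  have "distinct P" using acyclic_path_distinct[OF ac eP] .
  have "v \<in> set (tl P)" using path_edgesD[OF uv] by blast
  then have "v \<noteq> x" using \<open>distinct P\<close> \<open>P \<noteq> []\<close> \<open>hd P = x\<close> by (cases P) auto
  then have v_notin_Q: "v \<notin> set Q"
    using lca_paths_meet_only_at_lca[OF lca P Q] path_edges_mem_setD[OF uv] by blast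
  have "c \<notin> set P" using acyclic_dpath_successor_notin[OF ac P ac_E] .
  have "v \<in> set P" using path_edges_mem_setD[OF uv] by blast
  have "b \<in> set Q" using Q by (auto simp: dpath_iff_path_edges)
  have "w \<noteq> v" using wv ac unfolding acyclic_def by auto
  from pq consider "(p, q) \<in> path_edges P" | "(p, q) \<in> path_edges Q" | "(p, q) = (a, c)"
    | "(p, q) = (b, c)"
    by blast
  then show False
  proof cases
    case 1
    with wv_pq \<open>w \<noteq> v\<close> have "(w, v) \<in> path_edges P \<or> (v, w) \<in> path_edges P"
      by (auto simp: doubleton_eq_iff)
    then show False
    proof
      assume "(w, v) \<in> path_edges P"
      then show False using distinct_path_edges_same_target[OF \<open>distinct P\<close> _ uv] \<open>w \<noteq> u\<close> by blast
    next
      assume "(v, w) \<in> path_edges P"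
      then show False using eP wv acyclic_not_both_directions[OF ac] by blast
    qed
  next
    case 2
    then show False using wv_pq v_notin_Q path_edges_mem_setD by (fastforce simp: doubleton_eq_iff)
  next
    case 3
    then have "(v = a \<and> w = c) \<or> v = c" using wv_pq by (auto simp: doubleton_eq_iff)
    then show False using acyclic_not_both_directions[OF ac ac_E] wv \<open>c \<notin> set P\<close> \<open>v \<in> set P\<close> by blast
  next
    case 4
    then have "v = b \<or> v = c" using wv_pq by (auto simp: doubleton_eq_iff)
    then show False using \<open>b \<in> set Q\<close> v_notin_Q \<open>c \<notin> set P\<close> \<open>v \<in> set P\<close> by blast
  qed
qed

lemma cactus_network_lca_path_unique_parent:
  assumes cactus: "cactus_network V E" and lca: "is_lca E {a, b} x"
    and P: "dpath E P x a" and Q: "dpath E Q x b" and "a \<noteq> b"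
    and ac_E: "(a, c) \<in> E" and bc_E: "(b, c) \<in> E"
    and uv: "(u, v) \<in> path_edges P" and wv: "(w, v) \<in> E"
  shows "w = u"
proof (rule ccontr)
  assume "w \<noteq> u"
  have ac: "acyclic E" using cactus_network_acyclic[OF cactus] .
  have uv_E: "(u, v) \<in> E" using uv P by (auto simp: dpath_iff_path_edges)
  then have "u \<in> V" "w \<in> V" using wv cactus_network_edges[OF cactus] by auto
  then obtain y where lca_uw: "is_lca E {u, w} y" using cactus_network_lca_exists[OF cactus] by blast
  then have "(y, u) \<in> E\<^sup>*" "(y, w) \<in> E\<^sup>*" unfolding is_lca_def reach_def by auto
  then obtain P' Q' where P': "dpath E P' y u" and Q': "dpath E Q' y w"
    using rtrancl_imp_dpath by metis
  note cycle = lca_paths_cycle[OF ac lca P Q \<open>a \<noteq> b\<close> ac_E bc_E]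
  note cycle' = lca_paths_cycle[OF ac lca_uw P' Q' \<open>w \<noteq> u\<close>[symmetric] uv_E wv]
  have "{u, v} \<in> cycle_edges (P @ c # rev (tl Q))"
    using uv unfolding cycle(2) undirected_edges_def by force
  moreover have "{u, v} \<in> cycle_edges (P' @ v # rev (tl Q'))"
    unfolding cycle'(2) undirected_edges_def by force
  ultimately have same: "cycle_edges (P' @ v # rev (tl Q')) = cycle_edges (P @ c # rev (tl Q))"
    using cactus_network_cycles_sharing_edge[OF cactus cycle'(1) cycle(1)] by blast
  have "{w, v} \<in> cycle_edges (P' @ v # rev (tl Q'))"
    unfolding cycle'(2) undirected_edges_def by force
  then show False
    using second_parent_edge_not_on_lca_cycle[OF ac lca P Q ac_E uv wv \<open>w \<noteq> u\<close>]
    unfolding same cycle(2) by blast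
qed

section \<open>Paths along which every parent is unique\<close>

lemma dpath_unique_if_parents_unique:
  assumes ac: "acyclic E" and P: "dpath E P x v" and Q: "dpath E Q x v"
    and parent: "\<And>u v w. (u, v) \<in> path_edges P \<Longrightarrow> (w, v) \<in> E \<Longrightarrow> w = u"
  shows "Q = P"
  using Q P parent
proof (induction Q arbitrary: P v rule: rev_induct)
  case Nil
  then show ?case by (simp add: dpath_iff_path_edges)
next
  case (snoc v' Q)
  have "v' = v" and eQ: "path_edges (Q @ [v']) \<subseteq> E"
    using snoc.prems(1) by (auto simp: dpath_iff_path_edges)
  obtain P' where P_eq: "P = P' @ [v]"
    using snoc.prems(2) by (cases P rule: rev_exhaust) (auto simp: dpath_iff_path_edges)
  have "distinct (Q @ [v'])" using acyclic_path_distinct[OF ac eQ] .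
  have "distinct P" using acyclic_path_distinct[OF ac] snoc.prems(2) by (simp add: dpath_iff_path_edges)
  show ?case
  proof (cases "Q = []")
    case True
    then have "v = x" using snoc.prems(1) \<open>v' = v\<close> by (simp add: dpath_iff_path_edges)
    then have "P' = []"
      using snoc.prems(2) \<open>distinct P\<close> P_eq by (cases P') (auto simp: dpath_iff_path_edges)
    then show ?thesis using True P_eq \<open>v' = v\<close> by simp
  next
    case False
    have "x \<in> set Q" using snoc.prems(1) False by (cases Q) (auto simp: dpath_iff_path_edges)
    then have "P' \<noteq> []"
      using snoc.prems(2) \<open>distinct (Q @ [v'])\<close> \<open>v' = v\<close> P_eq by (auto simp: dpath_iff_path_edges)
    have "(last P', v) \<in> path_edges P" using P_eq \<open>P' \<noteq> []\<close> by (simp add: path_edges_snoc)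
    moreover have "(last Q, v) \<in> E" using eQ False \<open>v' = v\<close> by (simp add: path_edges_snoc)
    ultimately have "last Q = last P'" using snoc.prems(3) by blast
    have sub: "path_edges P' \<subseteq> path_edges P" using P_eq \<open>P' \<noteq> []\<close> by (auto simp: path_edges_snoc)
    have "dpath E Q x (last P')"
      using snoc.prems(1) False \<open>last Q = last P'\<close> by (auto simp: dpath_iff_path_edges path_edges_snoc)
    moreover have "dpath E P' x (last P')"
      using snoc.prems(2) P_eq \<open>P' \<noteq> []\<close> by (auto simp: dpath_iff_path_edges path_edges_snoc)
    ultimately have "Q = P'" using snoc.IH snoc.prems(3) sub by blast
    then show ?thesis using P_eq \<open>v' = v\<close> by simp
  qed
qed

lemma indeg_eq_1_if_parent_unique:
  assumes "(u, v) \<in> E" and "\<And>w. (w, v) \<in> E \<Longrightarrow> w = u"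
  shows "indeg E v = 1"
proof -
  have "{w. (w, v) \<in> E} = {u}" using assms by blast
  then show ?thesis by (simp add: indeg_def)
qed

lemma not_sink_if_parents_unique:
  assumes P: "dpath E P x p" and "v \<in> set P" "v \<noteq> x"
    and parent: "\<And>u v w. (u, v) \<in> path_edges P \<Longrightarrow> (w, v) \<in> E \<Longrightarrow> w = u"
  shows "\<not> is_sink E v"
proof -
  obtain u where uv: "(u, v) \<in> path_edges P"
    using path_edges_into_hd assms(2,3) P by (fastforce simp: dpath_iff_path_edges)
  moreover have "(u, v) \<in> E" using uv P by (auto simp: dpath_iff_path_edges)
  ultimately have "indeg E v = 1" using parent by (blast intro: indeg_eq_1_if_parent_unique)
  then show ?thesis by (simp add: is_sink_def)
qed

theorem lemma5:
  fixes V :: "'a set" and E :: "('a \<times> 'a) set"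
  assumes cactus: "cactus_network V E"
    and t_V: "t \<in> V"
    and sink: "is_sink E t"
    and parl: "(pl, t) \<in> E" and parr: "(pr, t) \<in> E" and neq: "pl \<noteq> pr"
    and lca: "is_lca E {pl, pr} s"
    and Pl: "dpath E Pl s pl" and Pr: "dpath E Pr s pr"
  shows "path_edges Pl \<inter> path_edges Pr = {} \<and>
         (\<forall>v \<in> set Pl \<union> set Pr. is_sink E v \<longrightarrow> v = s) \<and>
         (\<forall>Q. dpath E Q s pl \<longrightarrow> Q = Pl) \<and>
         (\<forall>Q. dpath E Q s pr \<longrightarrow> Q = Pr)"
proof -
  have ac: "acyclic E" using cactus_network_acyclic[OF cactus] .
  have parent_l: "\<And>u v w. (u, v) \<in> path_edges Pl \<Longrightarrow> (w, v) \<in> E \<Longrightarrow> w = u"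
    using cactus_network_lca_path_unique_parent[OF cactus lca Pl Pr neq parl parr] by blast
  have parent_r: "\<And>u v w. (u, v) \<in> path_edges Pr \<Longrightarrow> (w, v) \<in> E \<Longrightarrow> w = u"
    using cactus_network_lca_path_unique_parent[OF cactus _ Pr Pl neq[symmetric] parr parl] lca
    by (simp add: insert_commute)
  have "\<not> is_sink E v" if "v \<in> set Pl" "v \<noteq> s" for v
    using Pl that parent_l by (rule not_sink_if_parents_unique)
  moreover have "\<not> is_sink E v" if "v \<in> set Pr" "v \<noteq> s" for v
    using Pr that parent_r by (rule not_sink_if_parents_unique)
  moreover have "Q = Pl" if "dpath E Q s pl" for Q
    using ac Pl that parent_l by (rule dpath_unique_if_parents_unique)
  moreover have "Q = Pr" if "dpath E Q s pr" for Q
    using ac Pr that parent_r by (rule dpath_unique_if_parents_unique)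
  ultimately show ?thesis using lca_paths_edge_disjoint[OF ac lca Pl Pr] by blast
qed

end
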